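(* Let $\mathbf X_I=(X_1,\dots,X_d)$ satisfy conditions (i) and (ii) below and let $I_1,\dots,I_p$ be a partition of $I$. Then for all $(\lambda_1,\dots,\lambda_p)\in(0,\infty)^p$, $$\min_{1\le j\le p}\lambda_j^{-1}\varepsilon_{\mathbf X_{I_j}}(1)\;\le\;\varepsilon_{\mathbf X_{I_1},\dots,\mathbf X_{I_p}}(\lambda_1,\dots,\lambda_p)\;\le\;\sum_{j=1}^p\lambda_j^{-1}\varepsilon_{\mathbf X_{I_j}}(1).$$
   Context: Let $d\ge 1$, $I=\{1,\dots,d\}$, and let $I_1,\dots,I_p$ ($1\le p\le d$) be a partition of $I$ into nonempty blocks of consecutive indices. Let $\mathbf X_I=(X_1,\dots,X_d)$ be a random vector with joint distribution function $F_{\mathbf X_I}$ and univariate marginal distribution functions $F_i$ such that: (i) $F_i(t)=\exp(-\sigma_i t^{-1/\eta})$ for $t>0$, $i=1,\dots,d$, for some constants $\sigma_i>0$ and $\eta\in(0,1]$; (ii) the function $\ell_{\mathbf X_I}(t_1,\dots,t_d)=-\ln F_{\mathbf X_I}(t_1,\dots,t_d)$, $(t_1,\dots,t_d)\in(0,\infty)^d$, is homogeneous of order $-1/\eta$, i.e. $\ell_{\mathbf X_I}(s\mathbf t)=s^{-1/\eta}\ell_{\mathbf X_I}(\mathbf t)$ for all $s>0$. For nonempty $J\subseteq I$, $M(J)=\max_{i\in J}F_i(X_i)$. For pairwise disjoint nonempty $J_1,\dots,J_q\subseteq I$ and $(\lambda_1,\dots,\lambda_q)\in(0,\infty)^q$,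 the extremal dependence function is $$\varepsilon_{\mathbf X_{J_1},\dots,\mathbf X_{J_q}}(\lambda_1,\dots,\lambda_q)=\frac{E\big(\max_{1\le k\le q}M(J_k)^{\lambda_k}\big)}{1-E\big(\max_{1\le k\le q}M(J_k)^{\lambda_k}\big)};$$ in particular (case $q=1$) $\varepsilon_{\mathbf X_J}(\lambda)=E(M(J)^{\lambda})/(1-E(M(J)^{\lambda}))$. *)

theory Defs
  imports "HOL-Probability.Probability"
begin

definition marg_cdf :: "'a measure \<Rightarrow> (nat \<Rightarrow> 'a \<Rightarrow> real) \<Rightarrow> nat \<Rightarrow> real \<Rightarrow> real" where
  "marg_cdf M X i t = measure M {\<omega> \<in> space M. X i \<omega> \<le> t}"

definition joint_cdf :: "'a measure \<Rightarrow> (nat \<Rightarrow> 'a \<Rightarrow> real) \<Rightarrow> nat \<Rightarrow> (nat \<Rightarrow> real) \<Rightarrow> real" where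
  "joint_cdf M X d t = measure M {\<omega> \<in> space M. \<forall>i\<in>{1..d}. X i \<omega> \<le> t i}"

definition Mmax :: "'a measure \<Rightarrow> (nat \<Rightarrow> 'a \<Rightarrow> real) \<Rightarrow> nat set \<Rightarrow> 'a \<Rightarrow> real" where
  "Mmax M X J \<omega> = Max ((\<lambda>i. marg_cdf M X i (X i \<omega>)) ` J)"

definition ext_dep :: "'a measure \<Rightarrow> (nat \<Rightarrow> 'a \<Rightarrow> real) \<Rightarrow> nat \<Rightarrow> (nat \<Rightarrow> nat set) \<Rightarrow> (nat \<Rightarrow> real) \<Rightarrow> real" where
  "ext_dep M X q J lam =
     (let e = integral\<^sup>L M (\<lambda>\<omega>. Max ((\<lambda>k. Mmax M X (J k) \<omega> powr lam k) ` {1..q}))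
      in e / (1 - e))"

definition ext_dep1 :: "'a measure \<Rightarrow> (nat \<Rightarrow> 'a \<Rightarrow> real) \<Rightarrow> nat set \<Rightarrow> real \<Rightarrow> real" where
  "ext_dep1 M X J l = ext_dep M X 1 (\<lambda>_. J) (\<lambda>_. l)"

end

theory Submission
  imports Defs "HOL-Real_Asymp.Real_Asymp"
begin

text \<open>
  For weights \<open>w\<close>, the event \<open>{\<forall>i\<in>J. F\<^sub>i(X\<^sub>i) \<le> u\<^bsup>1/w\<^sub>i\<^esup>}\<close> is a joint-cdf event at thresholds
  \<open>s \<cdot> (\<sigma>\<^sub>i w\<^sub>i)\<^sup>\<eta>\<close> with \<open>s = (-ln u)\<^bsup>-\<eta>\<^esup>\<close>, so homogeneity of \<open>\<ell> = -ln F\<close> gives it probability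
  \<open>u\<^bsup>\<ell>\<^sub>J\<^esup>\<close>. Hence a random variable such as \<open>max\<^sub>k M(I\<^sub>k)\<^bsup>\<lambda>\<^sub>k\<^esup>\<close> has distribution function
  \<open>u\<^sup>c\<close> on \<open>[0,1]\<close>, its mean is \<open>c/(c+1)\<close>, and the extremal dependence function equals \<open>c\<close>, the
  exponent \<open>\<ell>\<close> of the whole vector at weights \<open>\<lambda>\<^sub>k\<close> on block \<open>k\<close>. The lower bound is then
  monotonicity of \<open>\<ell>\<close> in the index set; the upper bound is subadditivity of \<open>\<ell>\<close> over the
  blocks, which follows from the union bound \<open>1 - u\<^sup>c \<le> \<Sum>\<^sub>j (1 - u\<^bsup>c\<^sub>j\<^esup>)\<close> as \<open>u \<rightarrow> 1\<close>.
\<close>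

lemma powr_le_iff_le_powr_inverse:
  fixes y u l :: real
  assumes "0 \<le> y" "0 < u" "0 < l"
  shows "y powr l \<le> u \<longleftrightarrow> y \<le> u powr (1 / l)"
proof
  assume "y powr l \<le> u"
  then have "(y powr l) powr (1 / l) \<le> u powr (1 / l)"
    using assms by (intro powr_mono2) auto
  then show "y \<le> u powr (1 / l)"
    using assms by (simp add: powr_powr)
next
  assume "y \<le> u powr (1 / l)"
  then have "y powr l \<le> (u powr (1 / l)) powr l"
    using assms by (intro powr_mono2) auto
  then show "y powr l \<le> u"
    using assms by (simp add: powr_powr)
qed

lemma le_of_one_minus_exp_le:
  fixes c B :: real
  assumes "\<And>x. x > 0 \<Longrightarrow> 1 - exp (- (x * c)) \<le> x * B"
  shows "c \<le> B"
proof (rule tendsto_upperbound)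
  show "((\<lambda>x::real. (1 - exp (- (x * c))) / x) \<longlongrightarrow> c) (at_right 0)"
    by real_asymp
  show "\<forall>\<^sub>F x in at_right 0. (1 - exp (- (x * c))) / x \<le> B"
    using eventually_at_right_less[of 0] by eventually_elim (use assms in \<open>simp add: divide_le_eq mult.commute\<close>)
qed simp

lemma integral_powr_law:
  fixes M :: "'a measure" and Y :: "'a \<Rightarrow> real" and c :: real
  assumes "prob_space M" and Y_meas: "Y \<in> borel_measurable M"
    and Y_01: "\<And>\<omega>. \<omega> \<in> space M \<Longrightarrow> 0 \<le> Y \<omega> \<and> Y \<omega> \<le> 1"
    and "c \<ge> 0"
    and law: "\<And>u. 0 < u \<Longrightarrow> u < 1 \<Longrightarrow> measure M {\<omega> \<in> space M. Y \<omega> \<le> u} = u powr c"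
  shows "integral\<^sup>L M Y = c / (c + 1)"
proof -
  interpret prob_space M by fact
  interpret pair_sigma_finite M lborel
    by (simp add: pair_sigma_finite_def sigma_finite_measure_axioms lborel.sigma_finite_measure_axioms)
  define f where "f = (\<lambda>\<omega> u. indicator {0<..<1::real} u * indicator {x. u < Y x} \<omega> :: ennreal)"
  have f_meas: "case_prod f \<in> borel_measurable (M \<Otimes>\<^sub>M lborel)"
    unfolding f_def using Y_meas by measurable
  have inner_lborel: "(\<integral>\<^sup>+ u. f \<omega> u \<partial>lborel) = ennreal (Y \<omega>)" if "\<omega> \<in> space M" for \<omega>
  proof -
    have "f \<omega> = indicator {0<..<Y \<omega>}"
      using Y_01[OF that] by (auto simp: f_def indicator_def fun_eq_iff)
    then show ?thesis using Y_01[OF that] by (simp add: emeasure_lborel_Ioo)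
  qed
  have inner_M: "(\<integral>\<^sup>+ \<omega>. f \<omega> u \<partial>M) = ennreal (1 - u powr c) * indicator {0<..<1} u" for u
  proof (cases "0 < u \<and> u < 1")
    case True
    have "{\<omega> \<in> space M. Y \<omega> \<le> u} \<in> sets M" using Y_meas by measurable
    moreover have "{\<omega> \<in> space M. u < Y \<omega>} = space M - {\<omega> \<in> space M. Y \<omega> \<le> u}" by auto
    ultimately have "emeasure M {\<omega> \<in> space M. u < Y \<omega>} = ennreal (1 - u powr c)"
      using True law[of u] by (simp add: emeasure_eq_measure prob_compl)
    moreover have "(\<integral>\<^sup>+ \<omega>. f \<omega> u \<partial>M) = (\<integral>\<^sup>+ \<omega>. indicator {\<omega> \<in> space M. u < Y \<omega>} \<omega> \<partial>M)"
      using True by (intro nn_integral_cong) (auto simp: f_def indicator_def)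
    moreover have "{\<omega> \<in> space M. u < Y \<omega>} \<in> sets M" using Y_meas by measurable
    ultimately show ?thesis using True by simp
  qed (auto simp: f_def indicator_def)
  have "((\<lambda>u. u powr c) has_integral (1 powr (c+1) / (c+1))) {0..1}"
    using \<open>c \<ge> 0\<close> by (intro has_integral_powr_from_0) auto
  then have "((\<lambda>u. 1 - u powr c) has_integral (1 - 1 / (c+1))) {0..1::real}"
    by (intro has_integral_diff) (auto intro: has_integral_const_real[where c=1 and a=0 and b=1, simplified])
  moreover have "1 - 1 / (c+1) = c / (c+1)" using \<open>c \<ge> 0\<close> by (simp add: field_simps)
  ultimately have integral_01: "((\<lambda>u. 1 - u powr c) has_integral (c / (c + 1))) {0<..<1}"
    by (simp add: has_integral_Icc_iff_Ioo)
  have "(\<integral>\<^sup>+ \<omega>. ennreal (Y \<omega>) \<partial>M) = (\<integral>\<^sup>+ \<omega>. (\<integral>\<^sup>+ u. f \<omega> u \<partial>lborel) \<partial>M)"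
    using inner_lborel by (intro nn_integral_cong) simp
  also have "\<dots> = (\<integral>\<^sup>+ u. (\<integral>\<^sup>+ \<omega>. f \<omega> u \<partial>M) \<partial>lborel)"
    using Fubini'[OF f_meas] by simp
  also have "\<dots> = ennreal (c / (c + 1))"
    unfolding inner_M using integral_01 \<open>c \<ge> 0\<close>
    by (intro nn_integral_has_integral_lebesgue') (auto simp: powr_le1)
  finally show ?thesis
    using nn_integral_eq_integrable[of Y M "c/(c+1)"] Y_meas Y_01 \<open>c \<ge> 0\<close> by (auto intro: AE_I2)
qed

lemma odds_of_integral_powr_law:
  fixes M :: "'a measure" and Y :: "'a \<Rightarrow> real" and c :: real
  assumes "prob_space M" "Y \<in> borel_measurable M"
    and "\<And>\<omega>. \<omega> \<in> space M \<Longrightarrow> 0 \<le> Y \<omega> \<and> Y \<omega> \<le> 1" "c \<ge> 0"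
    and "\<And>u. 0 < u \<Longrightarrow> u < 1 \<Longrightarrow> measure M {\<omega> \<in> space M. Y \<omega> \<le> u} = u powr c"
  shows "(let e = integral\<^sup>L M Y in e / (1 - e)) = c"
proof -
  have "c / (c + 1) / (1 - c / (c + 1)) = c" using \<open>c \<ge> 0\<close> by (simp add: field_simps)
  then show ?thesis by (simp add: integral_powr_law[OF assms])
qed

lemma obtain_block_index:
  assumes "(\<Union>j\<in>P. I j) = K"
  obtains k where "\<And>i. i \<in> K \<Longrightarrow> k i \<in> P \<and> i \<in> I (k i)"
  using assms by (metis (mono_tags) UN_E)

lemma marg_cdf_nonneg: "0 \<le> marg_cdf M X i x"
  by (simp add: marg_cdf_def)

lemma marg_cdf_le_1:
  assumes "prob_space M"
  shows "marg_cdf M X i x \<le> 1"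
  using assms by (simp add: marg_cdf_def prob_space.prob_le_1)

lemma Mmax_le_iff:
  assumes "finite J" "J \<noteq> {}"
  shows "Mmax M X J \<omega> \<le> v \<longleftrightarrow> (\<forall>i\<in>J. marg_cdf M X i (X i \<omega>) \<le> v)"
  unfolding Mmax_def using assms by simp

lemma Mmax_nonneg:
  assumes "finite J" "J \<noteq> {}"
  shows "0 \<le> Mmax M X J \<omega>"
proof -
  obtain i where "i \<in> J" using assms by auto
  then have "marg_cdf M X i (X i \<omega>) \<le> Mmax M X J \<omega>"
    unfolding Mmax_def using assms by (intro Max_ge) auto
  then show ?thesis using marg_cdf_nonneg order_trans by blast
qed

lemma Mmax_le_1:
  assumes "prob_space M" "finite J" "J \<noteq> {}"
  shows "Mmax M X J \<omega> \<le> 1"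
  by (simp add: Mmax_le_iff[OF assms(2,3)] marg_cdf_le_1[OF assms(1)])

locale frechet_homogeneous = prob_space M
  for M :: "'a measure" and X :: "nat \<Rightarrow> 'a \<Rightarrow> real" and d :: nat
    and \<sigma> :: "nat \<Rightarrow> real" and \<eta> :: real +
  assumes d_ge_1: "d \<ge> 1"
    and meas: "\<And>i. i \<in> {1..d} \<Longrightarrow> X i \<in> borel_measurable M"
    and eta: "0 < \<eta>" "\<eta> \<le> 1"
    and sigma: "\<And>i. i \<in> {1..d} \<Longrightarrow> \<sigma> i > 0"
    and marg: "\<And>i t. i \<in> {1..d} \<Longrightarrow> t > 0 \<Longrightarrow>
                 marg_cdf M X i t = exp (- \<sigma> i * t powr (-1/\<eta>))"
    and homog: "\<And>s t. s > 0 \<Longrightarrow> (\<forall>i\<in>{1..d}. t i > 0) \<Longrightarrow>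
                 - ln (joint_cdf M X d (\<lambda>i. s * t i)) = s powr (-1/\<eta>) * (- ln (joint_cdf M X d t))"
begin

abbreviation F :: "nat \<Rightarrow> real \<Rightarrow> real" where
  "F i x \<equiv> marg_cdf M X i x"

definition block_cdf :: "nat set \<Rightarrow> (nat \<Rightarrow> real) \<Rightarrow> real" where
  "block_cdf J t = measure M {\<omega> \<in> space M. \<forall>i\<in>J. X i \<omega> \<le> t i}"

definition ell :: "nat set \<Rightarrow> (nat \<Rightarrow> real) \<Rightarrow> real" where
  "ell J t = - ln (block_cdf J t)"

lemma joint_cdf_eq_block_cdf: "joint_cdf M X d t = block_cdf {1..d} t"
  by (simp add: joint_cdf_def block_cdf_def)

lemma block_cdf_singleton: "block_cdf {i} t = F i (t i)"
  by (simp add: block_cdf_def marg_cdf_def)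

lemma ell_cong: "(\<And>i. i \<in> J \<Longrightarrow> t i = t' i) \<Longrightarrow> ell J t = ell J t'"
  unfolding ell_def block_cdf_def by (intro arg_cong[where f = "\<lambda>A. - ln (measure M A)"]) auto

lemma block_event_sets:
  assumes "J \<subseteq> {1..d}"
  shows "{\<omega> \<in> space M. \<forall>i\<in>J. X i \<omega> \<le> t i} \<in> sets M"
proof -
  have "finite J" using assms finite_subset by blast
  then show ?thesis
    using assms meas by (intro sets.sets_Collect_finite_All) auto
qed

lemma block_cdf_antimono:
  assumes "J \<subseteq> K" "K \<subseteq> {1..d}"
  shows "block_cdf K t \<le> block_cdf J t"
  unfolding block_cdf_def using assms block_event_sets[of J t]
  by (intro finite_measure_mono) auto

lemma block_cdf_UN_ge:
  assumes "finite P" and I: "\<And>j. j \<in> P \<Longrightarrow> I j \<subseteq> {1..d}"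
  shows "1 - (\<Sum>j\<in>P. 1 - block_cdf (I j) t) \<le> block_cdf (\<Union>j\<in>P. I j) t"
proof -
  let ?E = "\<lambda>J. {\<omega> \<in> space M. \<forall>i\<in>J. X i \<omega> \<le> t i}"
  have E_sets: "(\<lambda>j. space M - ?E (I j)) ` P \<subseteq> sets M"
    using I block_event_sets by blast
  have "space M - ?E (\<Union>j\<in>P. I j) = (\<Union>j\<in>P. space M - ?E (I j))" by auto
  then have "measure M (space M - ?E (\<Union>j\<in>P. I j)) \<le> (\<Sum>j\<in>P. measure M (space M - ?E (I j)))"
    using finite_measure_subadditive_finite[OF \<open>finite P\<close> E_sets] by simp
  moreover have "?E (\<Union>j\<in>P. I j) \<in> sets M"
    using I by (intro block_event_sets) blast
  ultimately show ?thesis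
    using I block_event_sets by (simp add: prob_compl block_cdf_def)
qed

lemma F_mono: "i \<in> {1..d} \<Longrightarrow> x \<le> y \<Longrightarrow> F i x \<le> F i y"
  unfolding marg_cdf_def using block_event_sets[of "{i}"]
  by (intro finite_measure_mono) auto

lemma F_lt_1: "i \<in> {1..d} \<Longrightarrow> t > 0 \<Longrightarrow> F i t < 1"
  using marg sigma by simp

definition frechet_quantile :: "nat \<Rightarrow> real \<Rightarrow> real" where
  "frechet_quantile i v = (\<sigma> i / (- ln v)) powr \<eta>"

lemma frechet_quantile_pos: "i \<in> {1..d} \<Longrightarrow> 0 < v \<Longrightarrow> v < 1 \<Longrightarrow> frechet_quantile i v > 0"
  using sigma[of i] by (simp add: frechet_quantile_def)

lemma F_frechet_quantile:
  assumes i: "i \<in> {1..d}" and v: "0 < v" "v < 1"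
  shows "F i (frechet_quantile i v) = v"
proof -
  have "frechet_quantile i v powr (-1/\<eta>) = (\<sigma> i / (- ln v)) powr (-1)"
    unfolding frechet_quantile_def using eta by (simp add: powr_powr)
  also have "\<dots> = (- ln v) / \<sigma> i"
    using v sigma[OF i] by (simp add: powr_minus_divide)
  finally show ?thesis
    using marg[OF i frechet_quantile_pos[OF i v]] v sigma[OF i] by simp
qed

lemma F_le_iff_le_frechet_quantile:
  assumes i: "i \<in> {1..d}" and v: "0 < v" "v < 1"
  shows "F i x \<le> v \<longleftrightarrow> x \<le> frechet_quantile i v"
proof
  assume "x \<le> frechet_quantile i v"
  then show "F i x \<le> v" using F_mono[OF i] F_frechet_quantile[OF i v] by metis
next
  assume le: "F i x \<le> v"
  show "x \<le> frechet_quantile i v"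
  proof (rule ccontr)
    let ?q = "frechet_quantile i v"
    assume "\<not> x \<le> ?q"
    then have "x powr (-1/\<eta>) < ?q powr (-1/\<eta>)"
      using frechet_quantile_pos[OF i v] eta by (intro powr_less_mono2_neg) auto
    then have "F i ?q < F i x"
      using marg[OF i] frechet_quantile_pos[OF i v] \<open>\<not> x \<le> ?q\<close> sigma[OF i] by simp
    then show False using F_frechet_quantile[OF i v] le by simp
  qed
qed

lemma block_cdf_lt_1:
  assumes "J \<subseteq> {1..d}" "J \<noteq> {}" and "\<forall>i\<in>J. t i > 0"
  shows "block_cdf J t < 1"
proof -
  obtain i where "i \<in> J" using assms by auto
  then have "block_cdf J t \<le> F i (t i)"
    using block_cdf_antimono[of "{i}" J] assms by (simp add: block_cdf_singleton)
  also have "\<dots> < 1" using F_lt_1 \<open>i \<in> J\<close> assms by auto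
  finally show ?thesis .
qed

text \<open>Positivity of the joint cdf: by the union bound it is positive far enough out along the ray
  through \<open>t\<close>, and homogeneity of \<open>-ln\<close> transports this back to \<open>t\<close>.\<close>
lemma block_cdf_all_pos:
  assumes t: "\<forall>i\<in>{1..d}. t i > 0"
  shows "block_cdf {1..d} t > 0"
proof -
  define K where "K = (\<Sum>i\<in>{1..d}. \<sigma> i * t i powr (-1/\<eta>))"
  have "K \<ge> 0" unfolding K_def using sigma by (intro sum_nonneg) (simp add: less_imp_le)
  define s where "s = (2 * K + 1) powr \<eta>"
  have "s > 0" using \<open>K \<ge> 0\<close> by (simp add: s_def)
  have s_powr: "s powr (-1/\<eta>) = 1 / (2 * K + 1)"
    unfolding s_def using eta \<open>K \<ge> 0\<close> by (simp add: powr_powr powr_minus_divide)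
  have "1 - F i (s * t i) \<le> s powr (-1/\<eta>) * (\<sigma> i * t i powr (-1/\<eta>))" if i: "i \<in> {1..d}" for i
  proof -
    have "F i (s * t i) = exp (- (s powr (-1/\<eta>) * (\<sigma> i * t i powr (-1/\<eta>))))"
      using marg[OF i] \<open>s > 0\<close> t i by (simp add: powr_mult mult_ac)
    then show ?thesis using exp_ge_add_one_self[of "- (s powr (-1/\<eta>) * (\<sigma> i * t i powr (-1/\<eta>)))"]
      by simp
  qed
  then have "(\<Sum>i\<in>{1..d}. 1 - block_cdf {i} (\<lambda>i. s * t i)) \<le> s powr (-1/\<eta>) * K"
    unfolding K_def sum_distrib_left block_cdf_singleton by (intro sum_mono) auto
  also have "\<dots> < 1" unfolding s_powr using \<open>K \<ge> 0\<close> by (simp add: field_simps)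
  finally have "block_cdf {1..d} (\<lambda>i. s * t i) > 0"
    using block_cdf_UN_ge[of "{1..d}" "\<lambda>i. {i}" "\<lambda>i. s * t i"] by simp
  moreover have "block_cdf {1..d} (\<lambda>i. s * t i) < 1"
    using block_cdf_lt_1[of "{1..d}"] d_ge_1 \<open>s > 0\<close> t by simp
  ultimately have "ln (block_cdf {1..d} (\<lambda>i. s * t i)) < 0" by simp
  then have "s powr (-1/\<eta>) * ln (block_cdf {1..d} t) < 0"
    using homog[OF \<open>s > 0\<close> t] by (simp add: joint_cdf_eq_block_cdf)
  then have "block_cdf {1..d} t \<noteq> 0" by auto
  then show ?thesis by (simp add: block_cdf_def order_less_le)
qed

lemma block_cdf_all_homog:
  assumes t: "\<forall>i\<in>{1..d}. t i > 0" and "s > 0"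
  shows "block_cdf {1..d} (\<lambda>i. s * t i) = block_cdf {1..d} t powr (s powr (-1/\<eta>))"
proof -
  have "block_cdf {1..d} (\<lambda>i. s * t i) = exp (ln (block_cdf {1..d} (\<lambda>i. s * t i)))"
    using block_cdf_all_pos t \<open>s > 0\<close> by simp
  also have "\<dots> = exp (s powr (-1/\<eta>) * ln (block_cdf {1..d} t))"
    using homog[OF \<open>s > 0\<close> t] by (simp add: joint_cdf_eq_block_cdf)
  also have "\<dots> = block_cdf {1..d} t powr (s powr (-1/\<eta>))"
    using block_cdf_all_pos[OF t] by (simp add: powr_def mult.commute)
  finally show ?thesis .
qed

definition extend_by :: "nat set \<Rightarrow> (nat \<Rightarrow> real) \<Rightarrow> real \<Rightarrow> nat \<Rightarrow> real" where
  "extend_by J t T = (\<lambda>i. if i \<in> J then t i else T)"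

text \<open>The marginal cdf of a subvector is the limit of the joint cdf as the remaining thresholds
  grow; this is what carries positivity and homogeneity from \<open>{1..d}\<close> to every \<open>J\<close>.\<close>
lemma block_cdf_extend_by_LIMSEQ:
  assumes J: "J \<subseteq> {1..d}" and "r > 0"
  shows "(\<lambda>n. block_cdf {1..d} (extend_by J t (real (Suc n) * r))) \<longlonglongrightarrow> block_cdf J t"
proof -
  define A where "A n = {\<omega> \<in> space M. \<forall>i\<in>{1..d}. X i \<omega> \<le> extend_by J t (real (Suc n) * r) i}" for n
  have "range A \<subseteq> sets M" unfolding A_def using block_event_sets[of "{1..d}"] by auto
  moreover have "incseq A"
  proof (rule incseq_SucI)
    fix n
    have "real (Suc n) * r \<le> real (Suc (Suc n)) * r" using \<open>r > 0\<close> by simp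
    then show "A n \<subseteq> A (Suc n)" unfolding A_def extend_by_def by (auto intro: order_trans)
  qed
  moreover have "(\<Union>n. A n) = {\<omega> \<in> space M. \<forall>i\<in>J. X i \<omega> \<le> t i}"
  proof
    show "(\<Union>n. A n) \<subseteq> {\<omega> \<in> space M. \<forall>i\<in>J. X i \<omega> \<le> t i}"
      unfolding A_def extend_by_def using J by auto
  next
    show "{\<omega> \<in> space M. \<forall>i\<in>J. X i \<omega> \<le> t i} \<subseteq> (\<Union>n. A n)"
    proof
      fix \<omega> assume \<omega>: "\<omega> \<in> {\<omega> \<in> space M. \<forall>i\<in>J. X i \<omega> \<le> t i}"
      define B where "B = (\<Sum>i\<in>{1..d}. \<bar>X i \<omega>\<bar>)"
      obtain n where "B / r < real n" using reals_Archimedean2 by blast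
      then have "B < real (Suc n) * r" using \<open>r > 0\<close> by (simp add: field_simps)
      moreover have "X i \<omega> \<le> B" if "i \<in> {1..d}" for i
        using member_le_sum[of i "{1..d}" "\<lambda>i. \<bar>X i \<omega>\<bar>"] that unfolding B_def by simp
      ultimately have "\<omega> \<in> A n" using \<omega> unfolding A_def extend_by_def by force
      then show "\<omega> \<in> (\<Union>n. A n)" by blast
    qed
  qed
  ultimately show ?thesis
    using finite_Lim_measure_incseq[of A] by (simp add: A_def block_cdf_def)
qed

lemma block_cdf_pos:
  assumes "J \<subseteq> {1..d}" and "\<forall>i\<in>J. t i > 0"
  shows "block_cdf J t > 0"
proof -
  have "block_cdf {1..d} (extend_by J t 1) > 0"
    using assms by (intro block_cdf_all_pos) (auto simp: extend_by_def)
  also have "\<dots> \<le> block_cdf J t"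
    unfolding block_cdf_def using assms block_event_sets[of J t]
    by (intro finite_measure_mono) (auto simp: extend_by_def)
  finally show ?thesis .
qed

lemma block_cdf_homog:
  assumes J: "J \<subseteq> {1..d}" and t: "\<forall>i\<in>J. t i > 0" and "s > 0"
  shows "block_cdf J (\<lambda>i. s * t i) = block_cdf J t powr (s powr (-1/\<eta>))"
proof -
  have extend_scaled: "block_cdf {1..d} (extend_by J (\<lambda>i. s * t i) (real (Suc n) * 1))
      = block_cdf {1..d} (extend_by J t (real (Suc n) * (1/s))) powr (s powr (-1/\<eta>))" for n
  proof -
    have "extend_by J (\<lambda>i. s * t i) (real (Suc n) * 1) = (\<lambda>i. s * extend_by J t (real (Suc n) * (1/s)) i)"
      using \<open>s > 0\<close> by (auto simp: extend_by_def fun_eq_iff)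
    moreover have "\<forall>i\<in>{1..d}. extend_by J t (real (Suc n) * (1/s)) i > 0"
      using t \<open>s > 0\<close> by (auto simp: extend_by_def)
    ultimately show ?thesis using block_cdf_all_homog \<open>s > 0\<close> by simp
  qed
  have "(\<lambda>n. block_cdf {1..d} (extend_by J t (real (Suc n) * (1/s))) powr (s powr (-1/\<eta>)))
      \<longlonglongrightarrow> block_cdf J t powr (s powr (-1/\<eta>))"
    using block_cdf_extend_by_LIMSEQ[OF J, of "1/s" t] \<open>s > 0\<close> block_cdf_pos[OF J t]
    by (intro tendsto_powr) auto
  then show ?thesis
    unfolding extend_scaled[symmetric]
    using block_cdf_extend_by_LIMSEQ[OF J, of 1 "\<lambda>i. s * t i"] LIMSEQ_unique by simp
qed

lemma exp_neg_ell:
  assumes "J \<subseteq> {1..d}" and "\<forall>i\<in>J. t i > 0"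
  shows "exp (- ell J t) = block_cdf J t"
  using block_cdf_pos[OF assms] by (simp add: ell_def)

lemma ell_nonneg:
  assumes "J \<subseteq> {1..d}" and "\<forall>i\<in>J. t i > 0"
  shows "0 \<le> ell J t"
  using block_cdf_pos[OF assms] by (simp add: ell_def block_cdf_def)

lemma ell_mono:
  assumes "J \<subseteq> K" "K \<subseteq> {1..d}" and "\<forall>i\<in>K. t i > 0"
  shows "ell J t \<le> ell K t"
  using block_cdf_pos[of K t] block_cdf_antimono[of J K t] assms by (simp add: ell_def)

lemma ell_homog:
  assumes "J \<subseteq> {1..d}" and "\<forall>i\<in>J. t i > 0" and "s > 0"
  shows "ell J (\<lambda>i. s * t i) = s powr (-1/\<eta>) * ell J t"
  using block_cdf_homog[OF assms] block_cdf_pos[OF assms(1,2)] by (simp add: ell_def powr_def)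

lemma ell_UN_le:
  assumes "finite P" and I: "\<And>j. j \<in> P \<Longrightarrow> I j \<subseteq> {1..d}"
    and t: "\<forall>i\<in>(\<Union>j\<in>P. I j). t i > 0"
  shows "ell (\<Union>j\<in>P. I j) t \<le> (\<Sum>j\<in>P. ell (I j) t)"
proof (rule le_of_one_minus_exp_le)
  fix x :: real assume "x > 0"
  define s where "s = x powr (-\<eta>)"
  have "s > 0" and s_powr: "s powr (-1/\<eta>) = x"
    using \<open>x > 0\<close> eta by (auto simp: s_def powr_powr)
  have scaled: "block_cdf J (\<lambda>i. s * t i) = exp (- (x * ell J t))"
    if "J \<subseteq> {1..d}" "\<forall>i\<in>J. t i > 0" for J
    using ell_homog[OF that \<open>s > 0\<close>, unfolded s_powr] exp_neg_ell[of J "\<lambda>i. s * t i"] that \<open>s > 0\<close>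
    by simp
  have U: "(\<Union>j\<in>P. I j) \<subseteq> {1..d}" using I by blast
  have "(\<Sum>j\<in>P. 1 - block_cdf (I j) (\<lambda>i. s * t i)) = (\<Sum>j\<in>P. 1 - exp (- (x * ell (I j) t)))"
    using scaled I t by (intro sum.cong) auto
  then have "1 - exp (- (x * ell (\<Union>j\<in>P. I j) t)) \<le> (\<Sum>j\<in>P. 1 - exp (- (x * ell (I j) t)))"
    using block_cdf_UN_ge[OF \<open>finite P\<close>, of I "\<lambda>i. s * t i"] I scaled[OF U t] by simp
  also have "\<dots> \<le> (\<Sum>j\<in>P. x * ell (I j) t)"
  proof (rule sum_mono)
    fix j show "1 - exp (- (x * ell (I j) t)) \<le> x * ell (I j) t"
      using exp_ge_add_one_self[of "- (x * ell (I j) t)"] by simp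
  qed
  finally show "1 - exp (- (x * ell (\<Union>j\<in>P. I j) t)) \<le> x * (\<Sum>j\<in>P. ell (I j) t)"
    by (simp add: sum_distrib_left)
qed

lemma measure_marginals_le_powr:
  assumes J: "J \<subseteq> {1..d}" and w: "\<forall>i\<in>J. w i > 0" and u: "0 < u" "u < 1"
  shows "measure M {\<omega> \<in> space M. \<forall>i\<in>J. F i (X i \<omega>) \<le> u powr (1 / w i)}
         = u powr ell J (\<lambda>i. (\<sigma> i * w i) powr \<eta>)"
proof -
  define \<tau> where "\<tau> i = (\<sigma> i * w i) powr \<eta>" for i
  define s where "s = (- ln u) powr (- \<eta>)"
  have "- ln u > 0" using u by simp
  then have "s > 0" by (simp add: s_def)
  have \<tau>: "\<forall>i\<in>J. \<tau> i > 0"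
  proof
    fix i assume "i \<in> J"
    then have "\<sigma> i > 0" "w i > 0" using J w sigma by auto
    then show "\<tau> i > 0" by (simp add: \<tau>_def)
  qed
  have "F i x \<le> u powr (1 / w i) \<longleftrightarrow> x \<le> s * \<tau> i" if i: "i \<in> J" for i x
  proof -
    have "i \<in> {1..d}" "w i > 0" using i J w by auto
    have "u powr (1 / w i) < 1 powr (1 / w i)"
      using u \<open>w i > 0\<close> by (intro powr_less_mono2) auto
    then have v: "0 < u powr (1 / w i)" "u powr (1 / w i) < 1" using u by auto
    have "frechet_quantile i (u powr (1 / w i)) = (\<sigma> i * w i / (- ln u)) powr \<eta>"
      unfolding frechet_quantile_def using u \<open>w i > 0\<close> by (simp add: ln_powr field_simps)
    also have "\<dots> = (\<sigma> i * w i) powr \<eta> / (- ln u) powr \<eta>"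
      using \<open>- ln u > 0\<close> \<open>w i > 0\<close> sigma[OF \<open>i \<in> {1..d}\<close>]
        powr_divide[of "\<sigma> i * w i" "- ln u" \<eta>] by simp
    also have "\<dots> = s * \<tau> i"
      unfolding s_def \<tau>_def by (simp add: powr_minus divide_inverse mult.commute)
    finally show ?thesis using F_le_iff_le_frechet_quantile[OF \<open>i \<in> {1..d}\<close> v] by simp
  qed
  then have "measure M {\<omega> \<in> space M. \<forall>i\<in>J. F i (X i \<omega>) \<le> u powr (1 / w i)} = block_cdf J (\<lambda>i. s * \<tau> i)"
    unfolding block_cdf_def by (intro arg_cong[where f = "measure M"]) auto
  also have "\<dots> = exp (- (s powr (-1/\<eta>) * ell J \<tau>))"
    using ell_homog[OF J \<tau> \<open>s > 0\<close>] exp_neg_ell[of J "\<lambda>i. s * \<tau> i"] J \<tau> \<open>s > 0\<close> by simp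
  also have "s powr (-1/\<eta>) = - ln u"
    unfolding s_def using \<open>- ln u > 0\<close> eta by (simp add: powr_powr)
  finally show ?thesis
    using u by (simp add: powr_def \<tau>_def)
qed

lemma F_measurable: "i \<in> {1..d} \<Longrightarrow> (\<lambda>\<omega>. F i (X i \<omega>)) \<in> borel_measurable M"
  using borel_measurable_mono[of "F i"] F_mono meas by (simp add: mono_def measurable_compose)

lemma Mmax_measurable: "J \<subseteq> {1..d} \<Longrightarrow> Mmax M X J \<in> borel_measurable M"
  unfolding Mmax_def[abs_def] using F_measurable finite_subset[of J "{1..d}"]
  by (intro borel_measurable_Max) auto

lemma ext_dep_eq_ell:
  assumes "1 \<le> p"
    and I: "\<And>j. j \<in> {1..p} \<Longrightarrow> I j \<subseteq> {1..d}" "\<And>j. j \<in> {1..p} \<Longrightarrow> I j \<noteq> {}"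
    and lam: "\<And>j. j \<in> {1..p} \<Longrightarrow> lam j > 0"
    and w: "\<And>j i. j \<in> {1..p} \<Longrightarrow> i \<in> I j \<Longrightarrow> w i = lam j"
  shows "ext_dep M X p I lam = ell (\<Union>j\<in>{1..p}. I j) (\<lambda>i. (\<sigma> i * w i) powr \<eta>)"
proof -
  define U where "U = (\<Union>j\<in>{1..p}. I j)"
  define Z where "Z \<omega> = Max ((\<lambda>j. Mmax M X (I j) \<omega> powr lam j) ` {1..p})" for \<omega>
  have U: "U \<subseteq> {1..d}" unfolding U_def using I(1) by blast
  have fin: "finite (I j)" if "j \<in> {1..p}" for j
    using I(1)[OF that] finite_subset by blast
  have Mmax_01: "0 \<le> Mmax M X (I j) \<omega>" "Mmax M X (I j) \<omega> \<le> 1" if "j \<in> {1..p}" for j \<omega>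
    using Mmax_nonneg[OF fin[OF that] I(2)[OF that], where M = M and X = X]
      Mmax_le_1[OF prob_space_axioms fin[OF that] I(2)[OF that], where X = X] by auto
  have Z_le_iff: "Z \<omega> \<le> u \<longleftrightarrow> (\<forall>i\<in>U. F i (X i \<omega>) \<le> u powr (1 / w i))" if "u > 0" for \<omega> u
  proof -
    have "Z \<omega> \<le> u \<longleftrightarrow> (\<forall>j\<in>{1..p}. Mmax M X (I j) \<omega> powr lam j \<le> u)"
      unfolding Z_def using \<open>1 \<le> p\<close> by simp
    also have "\<dots> \<longleftrightarrow> (\<forall>j\<in>{1..p}. \<forall>i\<in>I j. F i (X i \<omega>) \<le> u powr (1 / w i))"
    proof (intro ball_cong refl)
      fix j assume j: "j \<in> {1..p}"
      have "Mmax M X (I j) \<omega> powr lam j \<le> u \<longleftrightarrow> Mmax M X (I j) \<omega> \<le> u powr (1 / lam j)"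
        using powr_le_iff_le_powr_inverse Mmax_01(1)[OF j] \<open>u > 0\<close> lam[OF j] by blast
      also have "\<dots> \<longleftrightarrow> (\<forall>i\<in>I j. F i (X i \<omega>) \<le> u powr (1 / w i))"
        using Mmax_le_iff[OF fin[OF j] I(2)[OF j]] w[OF j] by simp
      finally show "Mmax M X (I j) \<omega> powr lam j \<le> u \<longleftrightarrow> (\<forall>i\<in>I j. F i (X i \<omega>) \<le> u powr (1 / w i))" .
    qed
    finally show ?thesis by (auto simp: U_def)
  qed
  have Z_01: "0 \<le> Z \<omega> \<and> Z \<omega> \<le> 1" if "\<omega> \<in> space M" for \<omega>
  proof
    have "0 \<le> Mmax M X (I 1) \<omega> powr lam 1" by simp
    also have "\<dots> \<le> Z \<omega>" unfolding Z_def using \<open>1 \<le> p\<close> by (intro Max_ge) auto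
    finally show "0 \<le> Z \<omega>" .
    have "Mmax M X (I j) \<omega> powr lam j \<le> 1" if "j \<in> {1..p}" for j
      using Mmax_01[OF that] lam[OF that] by (intro powr_le1) auto
    then show "Z \<omega> \<le> 1" unfolding Z_def using \<open>1 \<le> p\<close> by simp
  qed
  have \<tau>_pos: "\<forall>i\<in>U. (\<sigma> i * w i) powr \<eta> > 0"
  proof
    fix i assume "i \<in> U"
    then obtain j where j: "j \<in> {1..p}" "i \<in> I j" by (auto simp: U_def)
    then have "\<sigma> i > 0" using I(1) sigma by blast
    moreover have "w i > 0" using w[OF j] lam[OF j(1)] by simp
    ultimately show "(\<sigma> i * w i) powr \<eta> > 0" by simp
  qed
  have "(let e = integral\<^sup>L M Z in e / (1 - e)) = ell U (\<lambda>i. (\<sigma> i * w i) powr \<eta>)"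
  proof (rule odds_of_integral_powr_law[OF prob_space_axioms _ Z_01])
    show "Z \<in> borel_measurable M"
      unfolding Z_def using Mmax_measurable I(1) by (intro borel_measurable_Max) auto
    show "0 \<le> ell U (\<lambda>i. (\<sigma> i * w i) powr \<eta>)"
      using U \<tau>_pos by (rule ell_nonneg)
    fix u :: real assume u: "0 < u" "u < 1"
    have w_pos: "\<forall>i\<in>U. w i > 0" using w lam by (auto simp: U_def)
    have "{\<omega> \<in> space M. Z \<omega> \<le> u} = {\<omega> \<in> space M. \<forall>i\<in>U. F i (X i \<omega>) \<le> u powr (1 / w i)}"
      using Z_le_iff[OF \<open>0 < u\<close>] by blast
    then show "measure M {\<omega> \<in> space M. Z \<omega> \<le> u} = u powr ell U (\<lambda>i. (\<sigma> i * w i) powr \<eta>)"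
      using measure_marginals_le_powr[OF U w_pos u] by simp
  qed
  then show ?thesis unfolding U_def Z_def ext_dep_def .
qed

lemma ext_dep1_eq_ell:
  assumes "J \<subseteq> {1..d}" "J \<noteq> {}"
  shows "ext_dep1 M X J 1 = ell J (\<lambda>i. \<sigma> i powr \<eta>)"
  using ext_dep_eq_ell[of 1 "\<lambda>_. J" "\<lambda>_. 1" "\<lambda>_. 1"] assms by (simp add: ext_dep1_def)

lemma ell_const_weight:
  assumes "J \<subseteq> {1..d}" "l > 0"
  shows "ell J (\<lambda>i. (\<sigma> i * l) powr \<eta>) = ell J (\<lambda>i. \<sigma> i powr \<eta>) / l"
proof -
  have \<sigma>: "\<forall>i\<in>J. \<sigma> i > 0" using assms(1) sigma by blast
  have "ell J (\<lambda>i. l powr \<eta> * \<sigma> i powr \<eta>) = (l powr \<eta>) powr (-1/\<eta>) * ell J (\<lambda>i. \<sigma> i powr \<eta>)"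
    using assms \<sigma> by (intro ell_homog) auto
  moreover have "(l powr \<eta>) powr (-1/\<eta>) = 1 / l"
    using \<open>l > 0\<close> eta by (simp add: powr_powr powr_minus_divide)
  ultimately show ?thesis
    using assms \<sigma> by (simp add: powr_mult mult.commute)
qed

end

theorem proposition2:
  fixes M :: "'a measure" and X :: "nat \<Rightarrow> 'a \<Rightarrow> real"
    and d p :: nat and \<sigma> :: "nat \<Rightarrow> real" and \<eta> :: real
    and I :: "nat \<Rightarrow> nat set" and lam :: "nat \<Rightarrow> real"
  assumes "prob_space M"
    and "d \<ge> 1"
    and meas: "\<And>i. i \<in> {1..d} \<Longrightarrow> X i \<in> borel_measurable M"
    and eta: "0 < \<eta>" "\<eta> \<le> 1"
    and sigma: "\<And>i. i \<in> {1..d} \<Longrightarrow> \<sigma> i > 0"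
    and marg: "\<And>i t. i \<in> {1..d} \<Longrightarrow> t > 0 \<Longrightarrow>
                 marg_cdf M X i t = exp (- \<sigma> i * t powr (-1/\<eta>))"
    and homog: "\<And>s t. s > 0 \<Longrightarrow> (\<forall>i\<in>{1..d}. t i > 0) \<Longrightarrow>
                 - ln (joint_cdf M X d (\<lambda>i. s * t i)) = s powr (-1/\<eta>) * (- ln (joint_cdf M X d t))"
    and p: "1 \<le> p" "p \<le> d"
    and blocks_ne: "\<And>j. j \<in> {1..p} \<Longrightarrow> I j \<noteq> {}"
    and blocks_consec: "\<And>j. j \<in> {1..p} \<Longrightarrow> \<exists>a b. I j = {a..b}"
    and blocks_disj: "\<And>j k. j \<in> {1..p} \<Longrightarrow> k \<in> {1..p} \<Longrightarrow> j \<noteq> k \<Longrightarrow> I j \<inter> I k = {}"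
    and blocks_cover: "(\<Union>j\<in>{1..p}. I j) = {1..d}"
    and lam_pos: "\<And>j. j \<in> {1..p} \<Longrightarrow> lam j > 0"
  shows "Min ((\<lambda>j. ext_dep1 M X (I j) 1 / lam j) ` {1..p}) \<le> ext_dep M X p I lam
       \<and> ext_dep M X p I lam \<le> (\<Sum>j\<in>{1..p}. ext_dep1 M X (I j) 1 / lam j)"
proof -
  interpret frechet_homogeneous M X d \<sigma> \<eta>
    by (intro frechet_homogeneous.intro frechet_homogeneous_axioms.intro; fact assms)
  have I: "I j \<subseteq> {1..d}" if "j \<in> {1..p}" for j
    using blocks_cover that by blast
  obtain k where k: "\<And>i. i \<in> {1..d} \<Longrightarrow> k i \<in> {1..p} \<and> i \<in> I (k i)"
    using obtain_block_index[OF blocks_cover] by blast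
  have k_eq: "k i = j" if "j \<in> {1..p}" "i \<in> I j" for i j
    using k[of i] blocks_disj[of "k i" j] I that by blast
  define \<tau> where "\<tau> i = (\<sigma> i * lam (k i)) powr \<eta>" for i
  have \<tau>_pos: "\<forall>i\<in>{1..d}. \<tau> i > 0"
  proof
    fix i assume i: "i \<in> {1..d}"
    then show "\<tau> i > 0" using sigma[OF i] lam_pos[of "k i"] k[OF i] by (simp add: \<tau>_def)
  qed
  have "ext_dep M X p I lam = ell (\<Union>j\<in>{1..p}. I j) \<tau>"
    unfolding \<tau>_def
  proof (rule ext_dep_eq_ell[OF p(1) I blocks_ne lam_pos])
    fix j i assume "j \<in> {1..p}" "i \<in> I j"
    then show "lam (k i) = lam j" by (simp add: k_eq)
  qed
  then have eps: "ext_dep M X p I lam = ell {1..d} \<tau>"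
    by (simp only: blocks_cover)
  have eps_block: "ext_dep1 M X (I j) 1 / lam j = ell (I j) \<tau>" if j: "j \<in> {1..p}" for j
  proof -
    have "ext_dep1 M X (I j) 1 / lam j = ell (I j) (\<lambda>i. (\<sigma> i * lam j) powr \<eta>)"
      by (simp add: ext_dep1_eq_ell[OF I[OF j] blocks_ne[OF j]] ell_const_weight[OF I[OF j] lam_pos[OF j]])
    also have "\<dots> = ell (I j) \<tau>"
      using k_eq[OF j] by (intro ell_cong) (simp add: \<tau>_def)
    finally show ?thesis .
  qed
  have "Min ((\<lambda>j. ext_dep1 M X (I j) 1 / lam j) ` {1..p}) \<le> ext_dep1 M X (I 1) 1 / lam 1"
    using p by (intro Min_le) auto
  also have "\<dots> = ell (I 1) \<tau>"
    using p by (intro eps_block) auto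
  also have "\<dots> \<le> ell {1..d} \<tau>"
    using I[of 1] p \<tau>_pos by (intro ell_mono) auto
  finally have lower: "Min ((\<lambda>j. ext_dep1 M X (I j) 1 / lam j) ` {1..p}) \<le> ext_dep M X p I lam"
    unfolding eps .
  have "ell {1..d} \<tau> \<le> (\<Sum>j\<in>{1..p}. ell (I j) \<tau>)"
    using ell_UN_le[of "{1..p}" I \<tau>] I \<tau>_pos unfolding blocks_cover by blast
  also have "\<dots> = (\<Sum>j\<in>{1..p}. ext_dep1 M X (I j) 1 / lam j)"
    using eps_block by (intro sum.cong) auto
  finally show ?thesis
    using lower eps by simp
qed

end
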